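(* Let $(q_{i,j})_{i,j\in\mathbb Z^{\geq 0}}$ be the array defined greedily by $q_{i,j}=\operatorname{mex}(\{q_{i,k}+q_{l,j}-q_{l,k}\mid 0\leq l<i,\ 0\leq k<j\}\cap\mathbb Z^{\geq 0})$, so that $q_{0,j}=0$ and $q_{1,j}=j$. Put $q_j=q_{2,j}$, and for $j\in\mathbb Z^{\geq 0}$ let $S_j=\{q_{2,k}+q_{l,j}-q_{l,k}\mid 0\le l<2,\ 0\le k<j\}\cap\mathbb Z^{\ge 0}$ (so $q_j=\operatorname{mex}(S_j)$), $U_j=\{q_k\mid 0\leq k<j\}$ and $W_j=\{q_k+j-k\mid 0\leq k<j\}$. For $j\in\mathbb N$ let $n(j)=\max\{k\mid\{0,1,\dots,k\}\subseteq U_j\}$, write $U_j=\{0,1,\dots,n(j),z_{j,1},\dots,z_{j,j-n(j)-1}\}$ with $n(j)+2\le z_{j,1}<\dots<z_{j,j-n(j)-1}$, and let $m(j)=\lfloor\varphi j\rfloor-j+1$. Then for every $j\in\mathbb Z^{\geq 0}$: (i) if $j\geq1$, $W_j=\{m(j),m(j)+1,\dots,\lfloor\varphi j\rfloor\}$; (ii) if $j\geq1$, $z_{j,i}=b(k_j+i-1)$ for all $i\in\{1,\dots,j-n(j)-1\}$, where $k_j$ is the least natural number with $b(k_j)>n(j)$; (iii) if $j\geq1$ and $j\in T_1$, then $n(j)=m(j)-2$; (iv) if $j\geq1$ and $j\in T_2$, then $n(j)=m(j)-1$; (v) if $j\ge1$ and $j\in T_3$, then $n(j)=m(j)$; (vi)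 $S_j=\emptyset$ if $j=0$; $S_j=\{0,1,\dots,\lfloor\varphi j\rfloor\}$ if $j\in A$; $S_j=\{0,1,\dots,\lfloor\varphi j\rfloor\}\setminus\{\lfloor(\varphi-1)j\rfloor\}$ if $j\in B$; (vii) $q_j=0$ if $j=0$; $q_j=\lfloor\varphi j\rfloor+1$ if $j\in A$; $q_j=\lfloor(\varphi-1)j\rfloor$ if $j\in B$.
   Context: $\mathbb N=\{1,2,\dots\}$, $\mathbb Z^{\ge0}=\{0,1,2,\dots\}$, $\varphi=\frac{1+\sqrt5}{2}$, $a(n)=\lfloor n\varphi\rfloor$, $b(n)=\lfloor n\varphi^2\rfloor$, $A=\{a(n)\mid n\in\mathbb N\}$, $B=\{b(n)\mid n\in\mathbb N\}$. $T_1=\{b(n)\mid n\in\mathbb N\}$, $T_2=\{b(n)-1\mid n\in\mathbb N\}$, $T_3=\{2a(n)+n\mid n\in\mathbb N\}$. For $X\subseteq\mathbb Z^{\ge0}$, $\operatorname{mex}(X)=\min(\mathbb Z^{\ge0}\setminus X)$. *)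

theory Defs
  imports Complex_Main
begin

definition mex :: "int set \<Rightarrow> int" where
  "mex X = int (LEAST n::nat. int n \<notin> X)"

function qarr :: "nat \<Rightarrow> nat \<Rightarrow> int" where
  "qarr i j = mex ((\<lambda>(l,k). qarr i k + qarr l j - qarr l k) ` ({..<i} \<times> {..<j}) \<inter> {0..})"
  by auto
termination
  by (relation "measure (\<lambda>(i,j). i + j)") auto

definition phi :: real where "phi = (1 + sqrt 5) / 2"

definition a :: "nat \<Rightarrow> nat" where "a n = nat \<lfloor>real n * phi\<rfloor>"
definition b :: "nat \<Rightarrow> nat" where "b n = nat \<lfloor>real n * phi ^ 2\<rfloor>"

definition A :: "nat set" where "A = {a n | n. n \<ge> 1}"
definition B :: "nat set" where "B = {b n | n. n \<ge> 1}"
definition T1 :: "nat set" where "T1 = {b n | n. n \<ge> 1}"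
definition T2 :: "nat set" where "T2 = {b n - 1 | n. n \<ge> 1}"
definition T3 :: "nat set" where "T3 = {2 * a n + n | n. n \<ge> 1}"

definition qq :: "nat \<Rightarrow> int" where "qq j = qarr 2 j"

definition S :: "nat \<Rightarrow> int set" where
  "S j = {qarr 2 k + qarr l j - qarr l k | l k. l < 2 \<and> k < j} \<inter> {0..}"

definition U :: "nat \<Rightarrow> int set" where
  "U j = {qq k | k. k < j}"

definition W :: "nat \<Rightarrow> int set" where
  "W j = {qq k + int j - int k | k. k < j}"

definition nn :: "nat \<Rightarrow> int" where
  "nn j = Max {k::int. 0 \<le> k \<and> {0..k} \<subseteq> U j}"

definition zlist :: "nat \<Rightarrow> int list" where
  "zlist j = sorted_list_of_set (U j - {0..nn j})"

definition z :: "nat \<Rightarrow> nat \<Rightarrow> int" where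
  "z j i = zlist j ! (i - 1)"

definition m :: "nat \<Rightarrow> int" where
  "m j = int (a j) - int j + 1"

definition kk :: "nat \<Rightarrow> nat" where
  "kk j = (LEAST k. k \<ge> 1 \<and> int (b k) > nn j)"

end

theory Submission
  imports Defs "HOL-Computational_Algebra.Primes"
begin

(* The second row of the array is the Wythoff involution: q_j = partner j, where partner
   exchanges a n and b n and fixes 0.  Suppose q_k = partner k for all k < j.  Beatty counting
   (a n < j iff n <= a j - j, and b n < j iff n <= 2 j - a j - 1) gives
   U_j = {0} \<union> b{1..a j - j} \<union> a{1..2 j - a j - 1} and W_j = {a j - j + 1..a j}.
   The least number missing from U_j is hole j = min (a (2 j - a j)) (b (a j - j + 1)).  It exceeds
   a j - j when j is in A and equals a j - j when j is in B, so S_j is {0..a j}, with a j - j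
   removed in the second case, and its mex is partner j.  Moreover n(j) = hole j - 1, and every
   element of U_j above the hole is a b-value: this gives the z_{j,i} and n(j) on T1, T2 and T3. *)

section \<open>Beatty sequences of the golden ratio\<close>

lemma square_eq_five_times_square: "(d::nat)^2 = 5 * k^2 \<Longrightarrow> k = 0"
proof (induction k arbitrary: d rule: less_induct)
  case (less k)
  show ?case
  proof (rule ccontr)
    assume "k \<noteq> 0"
    have five: "prime (5::nat)" by simp
    have "5 dvd d" using less.prems prime_dvd_power[OF five, of d 2] by simp
    then obtain e where e: "d = 5 * e" ..
    then have "k^2 = 5 * e^2" using less.prems by (simp add: power_mult_distrib)
    then have "5 dvd k" using prime_dvd_power[OF five, of k 2] by simp
    then obtain f where f: "k = 5 * f" ..
    have "e^2 = 5 * f^2" using \<open>k^2 = 5 * e^2\<close> f by (simp add: power_mult_distrib)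
    then have "f = 0" using less.IH[of f] f \<open>k \<noteq> 0\<close> by simp
    then show False using f \<open>k \<noteq> 0\<close> by simp
  qed
qed

lemma phi_squared: "phi^2 = phi + 1"
  unfolding phi_def by (simp add: power2_eq_square algebra_simps)

lemma phi_bounds: "1.6 < phi" "phi < 1.7"
proof -
  have "2.2 < sqrt 5" by (rule real_less_rsqrt) (simp add: power2_eq_square)
  moreover have "sqrt 5 < 2.4" by (rule real_less_lsqrt) (auto simp: power2_eq_square)
  ultimately show "1.6 < phi" "phi < 1.7" unfolding phi_def by auto
qed

lemma mult_phi_not_int:
  assumes "n \<ge> 1" shows "real n * phi \<noteq> of_int c"
proof
  assume "real n * phi = of_int c"
  then have "sqrt 5 * real n = of_int (2 * c - int n)" unfolding phi_def by (simp add: field_simps)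
  then have "real_of_int ((2 * c - int n)^2) = (sqrt 5 * real n)^2" by simp
  also have "\<dots> = real_of_int (5 * (int n)^2)" by (simp add: power_mult_distrib)
  finally have "(2 * c - int n)^2 = 5 * (int n)^2" by linarith
  then have "int ((nat \<bar>2 * c - int n\<bar>)^2) = int (5 * n^2)" by simp
  then have "n = 0" by (intro square_eq_five_times_square[of "nat \<bar>2 * c - int n\<bar>"]) linarith
  then show False using assms by simp
qed

lemma mult_phi_phi: "x * phi * phi = x * phi + x"
proof -
  have "x * (phi * phi) = x * (phi + 1)" using phi_squared by (simp add: power2_eq_square)
  then show ?thesis by (simp add: algebra_simps)
qed

lemma nat_floor_eqI: "real c \<le> x \<Longrightarrow> x < real c + 1 \<Longrightarrow> nat \<lfloor>x\<rfloor> = c"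
  by (metis floor_eq2 nat_int of_int_of_nat_eq)

lemma a_le_mult_phi: "real (a n) \<le> real n * phi"
  and mult_phi_less_a_plus_1: "real n * phi < real (a n) + 1"
proof -
  have "real (a n) = of_int \<lfloor>real n * phi\<rfloor>" unfolding a_def using phi_bounds by simp
  then show "real (a n) \<le> real n * phi" "real n * phi < real (a n) + 1" by linarith+
qed

lemma a_less_mult_phi: "n \<ge> 1 \<Longrightarrow> real (a n) < real n * phi"
  using a_le_mult_phi[of n] mult_phi_not_int[of n "int (a n)"] by force

lemma b_eq: "b n = a n + n"
proof -
  have "b n = nat \<lfloor>real n * phi + real n\<rfloor>"
    unfolding b_def by (simp add: phi_squared algebra_simps)
  also have "\<dots> = a n + n"
    using a_le_mult_phi[of n] mult_phi_less_a_plus_1[of n] by (intro nat_floor_eqI) auto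
  finally show ?thesis .
qed

lemma floor_phi_minus_1_mult: "\<lfloor>(phi - 1) * real j\<rfloor> = int (a j) - int j"
proof -
  have "(phi - 1) * real j = real j * phi - of_int (int j)" by (simp add: algebra_simps)
  then have "\<lfloor>(phi - 1) * real j\<rfloor> = \<lfloor>real j * phi\<rfloor> - int j"
    by (simp only: floor_diff_of_int)
  then show ?thesis unfolding a_def using phi_bounds by simp
qed

lemma a_ge: "n \<le> a n"
  using mult_phi_less_a_plus_1[of n] phi_bounds
    mult_left_mono[of 1 phi "real n"] by linarith

lemma a_pos: "n \<ge> 1 \<Longrightarrow> a n \<ge> 1"
  using a_ge[of n] by simp

lemma a_less_double:
  assumes "n \<ge> 1" shows "a n < 2 * n"
proof -
  have "real n * phi < real n * 2" using assms phi_bounds by simp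
  then show ?thesis using a_le_mult_phi[of n] by linarith
qed

lemma a_Suc_bounds: "a n + 1 \<le> a (Suc n)" "a (Suc n) \<le> a n + 2"
  using a_le_mult_phi[of n] mult_phi_less_a_plus_1[of n]
    a_le_mult_phi[of "Suc n"] mult_phi_less_a_plus_1[of "Suc n"] phi_bounds
  by (simp_all add: distrib_right)

lemma strict_mono_a: "strict_mono a"
  using a_Suc_bounds(1) by (simp add: strict_mono_Suc_iff Suc_le_eq)

lemma strict_mono_b: "strict_mono b"
  using strict_mono_a unfolding strict_mono_def b_eq by (simp add: add_less_mono)

lemmas a_less_iff = strict_mono_less[OF strict_mono_a]
lemmas a_eq_iff = strict_mono_eq[OF strict_mono_a]
lemmas b_less_iff = strict_mono_less[OF strict_mono_b]
lemmas b_le_iff = strict_mono_less_eq[OF strict_mono_b]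
lemmas b_eq_iff = strict_mono_eq[OF strict_mono_b]

lemma a_less_iff_real: "a n < k \<longleftrightarrow> real n * phi < real k"
  using a_le_mult_phi[of n] mult_phi_less_a_plus_1[of n] by linarith

lemma a_less_iff_add_le:
  assumes "k \<ge> 1" shows "a n < k \<longleftrightarrow> n + k \<le> a k"
proof -
  have "real n * phi * (phi - 1) = real n"
    using mult_phi_phi[of "real n"] by (simp add: algebra_simps)
  moreover have "0 < phi - 1" using phi_bounds by simp
  ultimately have "a n < k \<longleftrightarrow> real n < real k * (phi - 1)"
    unfolding a_less_iff_real by (metis mult_less_cancel_right_pos)
  also have "\<dots> \<longleftrightarrow> real (n + k) < real k * phi"
    by (auto simp: right_diff_distrib)
  also have "\<dots> \<longleftrightarrow> n + k \<le> a k"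
    using a_less_mult_phi[OF assms] a_less_iff_real[of k "n + k"] by linarith
  finally show ?thesis .
qed

lemma b_less_iff_add_less: "b n < k \<longleftrightarrow> a k + n < 2 * k"
proof -
  have "real n * phi^2 * (2 - phi) = real n"
    using mult_phi_phi[of "real n"] by (simp add: phi_squared algebra_simps)
  have "0 < 2 - phi" using phi_bounds by simp
  have "b n < k \<longleftrightarrow> real n * phi^2 < real k"
    unfolding b_eq using a_le_mult_phi[of n] mult_phi_less_a_plus_1[of n]
    by (simp add: phi_squared algebra_simps) linarith
  also have "\<dots> \<longleftrightarrow> real n < real k * (2 - phi)"
    using \<open>real n * phi^2 * (2 - phi) = real n\<close> \<open>0 < 2 - phi\<close>
    by (metis mult_less_cancel_right_pos)
  also have "\<dots> \<longleftrightarrow> real n + real k * phi < 2 * real k"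
    by (auto simp: right_diff_distrib)
  also have "\<dots> \<longleftrightarrow> a k + n < 2 * k"
    using a_le_mult_phi[of k] mult_phi_less_a_plus_1[of k] by (intro iffI; linarith)
  finally show ?thesis .
qed

lemma mem_A_iff:
  assumes "k \<ge> 1" shows "k \<in> A \<longleftrightarrow> a (Suc k) = a k + 2"
proof
  assume "k \<in> A"
  then obtain n where "k = a n" unfolding A_def by auto
  then have "n + Suc k \<le> a (Suc k)" "a k < n + k"
    using a_less_iff_add_le[of "Suc k" n] a_less_iff_add_le[OF assms, of n] by auto
  then show "a (Suc k) = a k + 2" using a_Suc_bounds[of k] by linarith
next
  assume Suc_k: "a (Suc k) = a k + 2"
  define n where "n = a k - k + 1"
  have "\<not> a n < k" "a n < Suc k"
    using a_less_iff_add_le[OF assms, of n] a_less_iff_add_le[of "Suc k" n] Suc_k a_ge[of k]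
    unfolding n_def by auto
  then have "k = a n" by simp
  then show "k \<in> A" unfolding A_def n_def by auto
qed

lemma mem_B_iff:
  assumes "k \<ge> 1" shows "k \<in> B \<longleftrightarrow> a (Suc k) = a k + 1"
proof
  assume "k \<in> B"
  then obtain n where "k = b n" unfolding B_def by auto
  then have "a (Suc k) + n < 2 * k + 2" "2 * k \<le> a k + n"
    using b_less_iff_add_less[of n "Suc k"] b_less_iff_add_less[of n k] by auto
  then show "a (Suc k) = a k + 1" using a_Suc_bounds[of k] by linarith
next
  assume Suc_k: "a (Suc k) = a k + 1"
  define n where "n = 2 * k - a k"
  have "\<not> b n < k" "b n < Suc k"
    using b_less_iff_add_less[of n k] b_less_iff_add_less[of n "Suc k"] Suc_k a_less_double[OF assms]
    unfolding n_def by auto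
  then have "k = b n" by simp
  moreover have "n \<ge> 1" using a_less_double[OF assms] unfolding n_def by simp
  ultimately show "k \<in> B" unfolding B_def by auto
qed

lemma mem_A_iff_not_mem_B: "k \<ge> 1 \<Longrightarrow> k \<in> A \<longleftrightarrow> k \<notin> B"
  using mem_A_iff mem_B_iff a_Suc_bounds[of k] by fastforce

lemma zero_notin_A: "0 \<notin> A"
  unfolding A_def using a_ge by (fastforce dest: le_trans)

lemma zero_notin_B: "0 \<notin> B"
  unfolding B_def b_eq by auto

lemma a_neq_b: "n \<ge> 1 \<Longrightarrow> n' \<ge> 1 \<Longrightarrow> a n \<noteq> b n'"
  using mem_A_iff_not_mem_B[of "a n"] a_ge[of n] unfolding A_def B_def by fastforce

lemma zero_a_b_cases:
  obtains (zero) "k = 0"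
    | (a_value) n where "n \<ge> 1" "k = a n"
    | (b_value) n where "n \<ge> 1" "k = b n"
  using mem_A_iff_not_mem_B[of k] unfolding A_def B_def by (cases "k = 0") auto

lemma a_a: assumes "n \<ge> 1" shows "a (a n) + 1 = b n"
proof -
  define f where "f = real n * phi - real (a n)"
  have "0 < f" "f < 1"
    using a_less_mult_phi[OF assms] mult_phi_less_a_plus_1[of n] unfolding f_def by auto
  then have "0 < f * (phi - 1)" "f * (phi - 1) < 1"
    using phi_bounds mult_strict_mono[of f 1 "phi - 1" 1] by auto
  moreover have "real (a n) * phi = real (a n + n) - f * (phi - 1)"
    using mult_phi_phi[of "real n"] unfolding f_def by (simp add: algebra_simps)
  ultimately have "a (a n) = a n + n - 1"
    unfolding a_def using assms by (intro nat_floor_eqI) auto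
  then show ?thesis using assms b_eq by simp
qed

lemma a_b: "a (b n) = a n + b n"
proof -
  define f where "f = real n * phi - real (a n)"
  have "0 \<le> f" "f < 1"
    using a_le_mult_phi[of n] mult_phi_less_a_plus_1[of n] unfolding f_def by auto
  then have "0 \<le> f * (2 - phi)" "f * (2 - phi) < 1"
    using phi_bounds mult_strict_mono'[of f 1 "2 - phi" 1] by auto
  moreover have "real (b n) * phi = real (a n + b n) + f * (2 - phi)"
    using mult_phi_phi[of "real n"] unfolding f_def b_eq by (simp add: algebra_simps)
  ultimately show ?thesis
    unfolding a_def by (intro nat_floor_eqI) auto
qed

lemma a_Suc_a: assumes "n \<ge> 1" shows "a (Suc (a n)) = Suc (b n)"
proof -
  have "a (Suc (a n)) \<noteq> b n" using a_neq_b[OF _ assms] by simp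
  then show ?thesis using a_Suc_bounds[of "a n"] a_a[OF assms] by linarith
qed

lemma b_count_le_a_count: "2 * j - a j - 1 \<le> a j - j"
proof -
  have "real j * 1.6 \<le> real j * phi" using phi_bounds by (intro mult_left_mono) auto
  then have "3 * j \<le> 2 * a j + 1" using mult_phi_less_a_plus_1[of j] by linarith
  then show ?thesis by linarith
qed

lemma lessThan_eq_Beatty:
  assumes "j \<ge> 1"
  shows "{..<j} = insert 0 (a ` {1..a j - j} \<union> b ` {1..2 * j - a j - 1})"
proof -
  have a_below: "a n < j \<longleftrightarrow> n \<le> a j - j" for n
    using a_less_iff_add_le[OF assms, of n] a_ge[of j] by linarith
  have b_below: "b n < j \<longleftrightarrow> n \<le> 2 * j - a j - 1" for n
    using b_less_iff_add_less[of n j] a_less_double[OF assms] by linarith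
  show ?thesis
  proof (intro equalityI subsetI)
    fix k assume "k \<in> {..<j}"
    then show "k \<in> insert 0 (a ` {1..a j - j} \<union> b ` {1..2 * j - a j - 1})"
      using a_below b_below by (cases k rule: zero_a_b_cases) auto
  qed (use assms a_below b_below in auto)
qed

section \<open>The Wythoff involution\<close>

definition partner :: "nat \<Rightarrow> nat" where
  "partner k = (if k = 0 then 0 else if k \<in> A then a k + 1 else a k - k)"

lemma partner_0 [simp]: "partner 0 = 0"
  by (simp add: partner_def)

lemma partner_a: assumes "n \<ge> 1" shows "partner (a n) = b n"
  using a_pos[OF assms] a_a[OF assms] assms unfolding partner_def A_def by auto

lemma partner_b: assumes "n \<ge> 1" shows "partner (b n) = a n"
proof -
  have "b n \<ge> 1" "b n \<in> B" using assms unfolding b_eq B_def by auto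
  then show ?thesis using mem_A_iff_not_mem_B[of "b n"] a_b[of n] unfolding partner_def by simp
qed

lemma partner_partner: "partner (partner k) = k"
  by (cases k rule: zero_a_b_cases) (simp_all add: partner_a partner_b)

lemma inj_partner: "inj partner"
  by (metis injI partner_partner)

lemma partner_image_lessThan:
  assumes "j \<ge> 1"
  shows "partner ` {..<j} = insert 0 (b ` {1..a j - j} \<union> a ` {1..2 * j - a j - 1})"
proof -
  have "partner ` a ` {1..a j - j} = b ` {1..a j - j}"
    unfolding image_image by (rule image_cong) (auto simp: partner_a)
  moreover have "partner ` b ` {1..2 * j - a j - 1} = a ` {1..2 * j - a j - 1}"
    unfolding image_image by (rule image_cong) (auto simp: partner_b)
  ultimately show ?thesis by (subst lessThan_eq_Beatty[OF assms]) (simp add: image_Un)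
qed

lemma partner_less_a: assumes "k < j" shows "partner k < a j"
proof (cases k rule: zero_a_b_cases)
  case zero
  then show ?thesis using a_pos[of j] assms by simp
next
  case (a_value n)
  then have "n + j \<le> a j" using a_less_iff_add_le[of j n] assms by simp
  then show ?thesis using a_value assms partner_a b_eq by simp
next
  case (b_value n)
  then have "partner k = a n" using partner_b by simp
  then show ?thesis using b_value assms a_ge[of j] b_eq[of n] by simp
qed

lemma shifted_partner_image: "(\<lambda>k. partner k + j - k) ` {..<j} = {a j - j + 1 .. a j}"
proof (cases "j = 0")
  case False
  then have j: "j \<ge> 1" by simp
  define F G where "F = a j - j" and "G = 2 * j - a j - 1"
  have G_less: "G < j" and F_eq: "j + F = a j" and G_eq: "j - G = a j - j + 1"
    using a_ge[of j] a_less_double[OF j] unfolding F_def G_def by auto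
  have "(\<lambda>k. partner k + j - k) ` a ` {1..F} = (\<lambda>n. n + j) ` {1..F}"
    unfolding image_image by (rule image_cong) (auto simp: partner_a b_eq)
  also have "\<dots> = {j + 1..j + F}" by (simp add: add.commute)
  finally have above: "(\<lambda>k. partner k + j - k) ` a ` {1..F} = {j + 1..j + F}" .
  have "(\<lambda>k. partner k + j - k) ` b ` {1..G} = (\<lambda>n. j - n) ` {1..G}"
  proof (unfold image_image, rule image_cong)
    fix n assume "n \<in> {1..G}"
    then show "partner (b n) + j - b n = j - n" using partner_b[of n] b_eq[of n] by simp
  qed simp
  also have "\<dots> = {j - G..<j}"
  proof (intro equalityI subsetI)
    fix x assume "x \<in> {j - G..<j}"
    then have "j - x \<in> {1..G}" "x = j - (j - x)" by auto
    then show "x \<in> (\<lambda>n. j - n) ` {1..G}" by blast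
  qed (use G_less in auto)
  finally have below: "(\<lambda>k. partner k + j - k) ` b ` {1..G} = {j - G..<j}" .
  have "{..<j} = insert 0 (a ` {1..F} \<union> b ` {1..G})"
    using lessThan_eq_Beatty[OF j] unfolding F_def G_def .
  then have "(\<lambda>k. partner k + j - k) ` {..<j} = insert j ({j + 1..j + F} \<union> {j - G..<j})"
    by (simp only: image_insert image_Un above below) simp
  also have "\<dots> = {j - G..j + F}" using G_less by auto
  finally show ?thesis unfolding F_eq G_eq .
qed (simp add: a_def)

section \<open>The first gap in the values of the involution\<close>

(* The first a-value and the first b-value missing from partner ` {..<j}, by partner_image_lessThan. *)
definition hole :: "nat \<Rightarrow> nat" where
  "hole j = min (a (2 * j - a j)) (b (a j - j + 1))"

lemma lessThan_hole_subset:
  assumes "j \<ge> 1" shows "{..<hole j} \<subseteq> partner ` {..<j}"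
proof
  fix x assume "x \<in> {..<hole j}"
  then show "x \<in> partner ` {..<j}"
    unfolding partner_image_lessThan[OF assms] hole_def
    by (cases x rule: zero_a_b_cases) (auto simp: a_less_iff b_less_iff)
qed

lemma hole_notin_partner_image:
  assumes "j \<ge> 1" shows "hole j \<notin> partner ` {..<j}"
proof -
  have "2 * j - a j \<ge> 1" using a_less_double[OF assms] by simp
  then have "a (2 * j - a j) \<notin> insert 0 (b ` {1..a j - j} \<union> a ` {1..2 * j - a j - 1})"
    using a_pos[of "2 * j - a j"] a_neq_b by (auto simp: a_eq_iff)
  moreover have "b (a j - j + 1) \<notin> a ` {1..2 * j - a j - 1}"
    using a_neq_b[of _ "a j - j + 1"] by force
  then have "b (a j - j + 1) \<notin> insert 0 (b ` {1..a j - j} \<union> a ` {1..2 * j - a j - 1})"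
    by (auto simp: b_eq_iff) (simp add: b_eq)
  ultimately show ?thesis
    unfolding partner_image_lessThan[OF assms] hole_def min_def by simp
qed

lemma partner_image_minus_hole:
  assumes "j \<ge> 1"
  shows "partner ` {..<j} - {..<hole j} = b ` {n \<in> {1..a j - j}. hole j \<le> b n}"
proof -
  have "a n < hole j" if "1 \<le> n" "n \<le> 2 * j - a j - 1" for n
  proof -
    have "a n < b n" using that by (simp add: b_eq)
    also have "b n < b (a j - j + 1)" using that b_count_le_a_count[of j] by (simp add: b_less_iff)
    finally show ?thesis using that unfolding hole_def by (simp add: a_less_iff)
  qed
  moreover have "2 * j - a j \<ge> 1" using a_less_double[OF assms] by simp
  then have "0 < hole j" using a_pos[of "2 * j - a j"] unfolding hole_def b_eq by simp
  ultimately show ?thesis unfolding partner_image_lessThan[OF assms] by auto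
qed

lemma partner_image_Un_top:
  assumes "j \<ge> 1" "a j - j \<le> hole j"
  shows "partner ` {..<j} \<union> {a j - j + 1..a j} = {..a j} - {hole j..a j - j}"
proof (intro equalityI subsetI)
  fix x assume "x \<in> partner ` {..<j} \<union> {a j - j + 1..a j}"
  moreover have "x < a j" "x \<noteq> hole j" if "x \<in> partner ` {..<j}"
    using that partner_less_a hole_notin_partner_image[OF assms(1)] by blast+
  ultimately show "x \<in> {..a j} - {hole j..a j - j}" using assms(2) by auto
next
  fix x assume "x \<in> {..a j} - {hole j..a j - j}"
  then show "x \<in> partner ` {..<j} \<union> {a j - j + 1..a j}"
    using lessThan_hole_subset[OF assms(1)] by (cases "x < hole j") auto
qed

lemma hole_a:
  assumes "t \<ge> 1" shows "hole (a t) = min (a (a t - t + 1)) (b t)"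
proof -
  have "a (a t) = a t + t - 1" using a_a[OF assms] b_eq[of t] by simp
  then show ?thesis unfolding hole_def using assms a_ge[of t] by (simp add: Suc_diff_le)
qed

lemma hole_b:
  assumes "t \<ge> 1" shows "hole (b t) = a t"
proof -
  have "2 * b t - a (b t) = t" "a (b t) - b t + 1 = a t + 1" using a_b[of t] b_eq[of t] by simp_all
  moreover have "a t < b (a t + 1)" by (simp add: b_eq)
  ultimately show ?thesis unfolding hole_def by simp
qed

lemma hole_a_a:
  assumes "t \<ge> 1" shows "hole (a (a t)) = a t"
proof -
  have "a (a t) - a t + 1 = t" using a_a[OF assms] b_eq[of t] assms by simp
  then show ?thesis
    unfolding hole_a[OF a_pos[OF assms]] by (simp add: b_eq)
qed

lemma hole_a_b:
  assumes "t \<ge> 1" shows "hole (a (b t)) = b t + 1"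
proof -
  have "b t \<ge> 1" using assms by (simp add: b_eq)
  moreover have "a (b t) - b t + 1 = Suc (a t)" using a_b[of t] by simp
  moreover have "b t + 1 < b (b t)" using a_ge[of "b t"] a_pos[OF assms] assms by (simp add: b_eq)
  ultimately show ?thesis unfolding hole_a[OF \<open>b t \<ge> 1\<close>] by (simp add: a_Suc_a[OF assms])
qed

lemma a_minus_less_hole_if_A:
  assumes "j \<in> A" shows "a j - j < hole j"
proof -
  obtain t where t: "t \<ge> 1" "j = a t" using assms unfolding A_def by auto
  have "\<not> a (a t - t + 1) < t" using a_less_iff_add_le[OF t(1)] by simp
  moreover have "t \<le> b t" by (simp add: b_eq)
  moreover have "a (a t) - a t < t" using a_a[OF t(1)] b_eq[of t] t(1) by simp
  ultimately show ?thesis unfolding t(2) hole_a[OF t(1)] by simp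
qed

lemma hole_eq_if_B:
  assumes "j \<in> B" shows "hole j = a j - j"
proof -
  obtain t where t: "t \<ge> 1" "j = b t" using assms unfolding B_def by auto
  then show ?thesis using hole_b[OF t(1)] a_b[of t] by simp
qed

lemma partner_image_Un_top_if_A:
  assumes "j \<in> A" shows "partner ` {..<j} \<union> {a j - j + 1..a j} = {..a j}"
proof -
  have "j \<ge> 1" using assms zero_notin_A by (cases j) auto
  with assms show ?thesis
    using partner_image_Un_top[of j] a_minus_less_hole_if_A[OF assms] by simp
qed

lemma partner_image_Un_top_if_B:
  assumes "j \<in> B" shows "partner ` {..<j} \<union> {a j - j + 1..a j} = {..a j} - {a j - j}"
proof -
  have "j \<ge> 1" using assms zero_notin_B by (cases j) auto
  with assms show ?thesis
    using partner_image_Un_top[of j] hole_eq_if_B[OF assms] by simp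
qed

section \<open>The second row of the greedy array\<close>

lemma mex_eqI:
  assumes "0 \<le> x" "x \<notin> X" "\<And>y. 0 \<le> y \<Longrightarrow> y < x \<Longrightarrow> y \<in> X"
  shows "mex X = x"
proof -
  obtain t where t: "x = int t" using assms(1) nonneg_int_cases by blast
  have "(LEAST n::nat. int n \<notin> X) = t"
  proof (rule Least_equality)
    show "int t \<notin> X" using assms(2) t by simp
    show "t \<le> y" if "int y \<notin> X" for y using that assms(3)[of "int y"] t by force
  qed
  then show ?thesis unfolding mex_def t by simp
qed

lemma image_int_atMost: "int ` {..n} = {0..int n}"
  by (simp add: atLeast0AtMost[symmetric] image_int_atLeastAtMost)

lemma mex_image_int_atMost: "mex (int ` {..n}) = int n + 1"
  by (rule mex_eqI) (auto intro!: image_eqI[where x = "nat y" for y])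

lemma mex_image_int_atMost_minus:
  "c \<le> n \<Longrightarrow> mex (int ` ({..n} - {c})) = int c"
  by (rule mex_eqI) (auto intro!: image_eqI[where x = "nat y" for y])

declare qarr.simps [simp del]

lemma qarr_0: "qarr 0 j = 0"
  by (subst qarr.simps) (rule mex_eqI, auto)

lemma qarr_1: "qarr (Suc 0) j = int j"
proof (induction j rule: less_induct)
  case (less j)
  have "(\<lambda>(l, k). qarr 1 k + qarr l j - qarr l k) ` ({..<1} \<times> {..<j}) = int ` {..<j}"
    using less.IH by (force simp: qarr_0)
  then show ?case
    by (subst qarr.simps) (rule mex_eqI, auto intro!: image_eqI[where x = "nat y" for y])
qed

lemma qq_eq_mex_S: "qq j = mex (S j)"
proof -
  have "(\<lambda>(l, k). qarr 2 k + qarr l j - qarr l k) ` ({..<2} \<times> {..<j})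
      = {qarr 2 k + qarr l j - qarr l k | l k. l < 2 \<and> k < j}"
    by force
  then show ?thesis unfolding qq_def S_def by (subst qarr.simps) simp
qed

lemma qq_nonneg: "0 \<le> qq j"
  unfolding qq_eq_mex_S mex_def by simp

lemma S_eq_U_Un_W: "S j = U j \<union> W j"
proof -
  have "{qarr 2 k + qarr l j - qarr l k | l k. l < 2 \<and> k < j}
      = {qarr 2 k + qarr 0 j - qarr 0 k | k. k < j} \<union> {qarr 2 k + qarr 1 j - qarr 1 k | k. k < j}"
    unfolding less_2_cases_iff by auto
  also have "\<dots> = U j \<union> W j"
    unfolding U_def W_def qq_def by (simp add: qarr_0 qarr_1)
  finally have "{qarr 2 k + qarr l j - qarr l k | l k. l < 2 \<and> k < j} = U j \<union> W j" .
  moreover have "U j \<union> W j \<subseteq> {0..}"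
  proof -
    have "0 \<le> qq k + int j - int k" if "k < j" for k using that qq_nonneg[of k] by simp
    then show ?thesis unfolding U_def W_def using qq_nonneg by auto
  qed
  ultimately show ?thesis unfolding S_def by blast
qed

lemma S_eq_if_qq_eq_partner:
  assumes "\<And>k. k < j \<Longrightarrow> qq k = int (partner k)"
  shows "S j = int ` (partner ` {..<j} \<union> {a j - j + 1..a j})"
proof -
  have "U j = int ` partner ` {..<j}"
    unfolding U_def using assms by force
  moreover have "W j = int ` (\<lambda>k. partner k + j - k) ` {..<j}"
    unfolding W_def using assms by (force simp: of_nat_diff)
  ultimately show ?thesis unfolding S_eq_U_Un_W shifted_partner_image image_Un by simp
qed

lemma qq_eq_partner: "qq j = int (partner j)"
proof (induction j rule: less_induct)
  case (less j)
  note S_j = S_eq_if_qq_eq_partner[OF less.IH]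
  consider (zero) "j = 0" | (in_A) "j \<in> A" "j \<noteq> 0" | (in_B) "j \<in> B" "j \<notin> A" "j \<noteq> 0"
    using mem_A_iff_not_mem_B[of j] by (cases "j = 0") auto
  then show ?case
  proof cases
    case zero
    then show ?thesis using S_j by (simp add: qq_eq_mex_S a_def mex_def)
  next
    case in_A
    then show ?thesis
      using S_j partner_image_Un_top_if_A[of j]
      by (simp add: qq_eq_mex_S partner_def mex_image_int_atMost)
  next
    case in_B
    then show ?thesis
      using S_j partner_image_Un_top_if_B[of j]
      by (simp add: qq_eq_mex_S partner_def mex_image_int_atMost_minus)
  qed
qed

lemma U_eq_partner_image: "U j = int ` partner ` {..<j}"
  unfolding U_def qq_eq_partner by force

lemma W_eq_interval: "W j = {int (a j) - int j + 1..int (a j)}"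
proof -
  have "W j = int ` (\<lambda>k. partner k + j - k) ` {..<j}"
    unfolding W_def qq_eq_partner by (force simp: of_nat_diff)
  then show ?thesis
    using a_ge[of j] by (simp add: shifted_partner_image image_int_atLeastAtMost of_nat_diff)
qed

lemma S_eq_partner_image: "S j = int ` (partner ` {..<j} \<union> {a j - j + 1..a j})"
  using S_eq_if_qq_eq_partner qq_eq_partner by blast

lemma S_if_A: "j \<in> A \<Longrightarrow> S j = {0..int (a j)}"
  unfolding S_eq_partner_image by (simp only: partner_image_Un_top_if_A image_int_atMost)

lemma S_if_B: "j \<in> B \<Longrightarrow> S j = {0..int (a j)} - {int (a j) - int j}"
  unfolding S_eq_partner_image
  using a_ge[of j] by (simp only: partner_image_Un_top_if_B image_set_diff[OF inj_of_nat])
    (simp add: image_int_atMost of_nat_diff)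

lemma qq_if_A: "j \<in> A \<Longrightarrow> qq j = int (a j) + 1"
  using zero_notin_A by (cases "j = 0") (auto simp: qq_eq_partner partner_def)

lemma qq_if_B: "j \<in> B \<Longrightarrow> qq j = int (a j) - int j"
  using zero_notin_B mem_A_iff_not_mem_B[of j] a_ge[of j]
  by (cases "j = 0") (auto simp: qq_eq_partner partner_def of_nat_diff)

section \<open>The run n(j) and the values of U_j above it\<close>

lemma nn_eqI:
  assumes "0 \<le> N" "{0..N} \<subseteq> U j" "N + 1 \<notin> U j"
  shows "nn j = N"
proof -
  have "k \<le> N" if "{0..k} \<subseteq> U j" for k
  proof (rule ccontr)
    assume "\<not> k \<le> N"
    then have "N + 1 \<in> {0..k}" using assms(1) by simp
    then show False using that assms(3) by blast
  qed
  then have "{k. 0 \<le> k \<and> {0..k} \<subseteq> U j} = {0..N}" using assms(2) by fastforce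
  moreover have "Max {0..N} = N" by (rule Max_eqI) (use assms(1) in auto)
  ultimately show ?thesis unfolding nn_def by simp
qed

lemma nn_eq_hole:
  assumes "j \<ge> 1" shows "nn j = int (hole j) - 1"
proof (rule nn_eqI)
  have "0 \<in> partner ` {..<j}" using assms by (auto intro: rev_image_eqI[of 0])
  then have "hole j \<noteq> 0" using hole_notin_partner_image[OF assms] by auto
  then show "0 \<le> int (hole j) - 1" by simp
  show "{0..int (hole j) - 1} \<subseteq> U j"
  proof
    fix y assume "y \<in> {0..int (hole j) - 1}"
    then have "nat y \<in> partner ` {..<j}" "y = int (nat y)"
      using lessThan_hole_subset[OF assms] by auto
    then show "y \<in> U j" unfolding U_eq_partner_image by blast
  qed
  show "int (hole j) - 1 + 1 \<notin> U j"
    unfolding U_eq_partner_image using hole_notin_partner_image[OF assms] by auto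
qed

lemma m_a: "n \<ge> 1 \<Longrightarrow> m (a n) = int n"
  using a_a[of n] a_ge[of "a n"] unfolding m_def b_eq by simp

lemma m_b: "m (b n) = int (a n) + 1"
  unfolding m_def a_b by simp

lemma nn_if_T1: "j \<in> T1 \<Longrightarrow> nn j = m j - 2"
proof -
  assume "j \<in> T1"
  then obtain t where t: "t \<ge> 1" "j = b t" unfolding T1_def by auto
  moreover have "b t \<ge> 1" using t(1) by (simp add: b_eq)
  ultimately show ?thesis using nn_eq_hole[of j] hole_b[OF t(1)] m_b[of t] by simp
qed

lemma nn_if_T2: "j \<in> T2 \<Longrightarrow> nn j = m j - 1"
proof -
  assume "j \<in> T2"
  then obtain t where t: "t \<ge> 1" "j = b t - 1" unfolding T2_def by auto
  then have "j = a (a t)" using a_a[OF t(1)] by simp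
  then show ?thesis
    using nn_eq_hole[of j] hole_a_a[OF t(1)] m_a[OF a_pos[OF t(1)]] a_pos[OF a_pos[OF t(1)]]
    by simp
qed

lemma nn_if_T3: "j \<in> T3 \<Longrightarrow> nn j = m j"
proof -
  assume "j \<in> T3"
  then obtain t where t: "t \<ge> 1" "j = 2 * a t + t" unfolding T3_def by auto
  moreover have "a (b t) = 2 * a t + t" using a_b[of t] b_eq[of t] by simp
  ultimately have "j = a (b t)" by simp
  moreover have "b t \<ge> 1" using t(1) by (simp add: b_eq)
  ultimately show ?thesis
    using nn_eq_hole[of j] hole_a_b[OF t(1)] m_a[of "b t"] a_pos[of "b t"] by simp
qed

lemma U_minus_nn:
  assumes "j \<ge> 1" shows "U j - {0..nn j} = int ` (partner ` {..<j} - {..<hole j})"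
proof -
  have "{0..nn j} = int ` {..<hole j}"
    unfolding nn_eq_hole[OF assms] by (auto intro!: image_eqI[where x = "nat y" for y])
  then show ?thesis unfolding U_eq_partner_image by (simp add: image_set_diff[OF inj_of_nat])
qed

lemma b_ge_indices_eq_atLeastAtMost:
  "{n \<in> {1..N}. c \<le> b n} = {(LEAST k. 1 \<le> k \<and> c \<le> b k)..N}"
proof -
  define K where "K = (LEAST k. 1 \<le> k \<and> c \<le> b k)"
  have "1 \<le> max 1 c \<and> c \<le> b (max 1 c)" using a_ge[of "max 1 c"] by (simp add: b_eq)
  then have K: "1 \<le> K" "c \<le> b K" unfolding K_def by (metis (mono_tags, lifting) LeastI)+
  have "K \<le> n" if "1 \<le> n" "c \<le> b n" for n unfolding K_def by (rule Least_le) (use that in simp)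
  moreover have "c \<le> b n" if "K \<le> n" for n using K(2) that b_le_iff[of K n] by simp
  ultimately show ?thesis using K(1) unfolding K_def[symmetric] by force
qed

lemma kk_eq_LEAST:
  assumes "j \<ge> 1" shows "kk j = (LEAST k. 1 \<le> k \<and> hole j \<le> b k)"
  unfolding kk_def nn_eq_hole[OF assms] by (rule arg_cong[where f = Least]) auto

lemma zlist_eq:
  assumes "j \<ge> 1" shows "zlist j = map (\<lambda>n. int (b n)) [kk j..<a j - j + 1]"
proof -
  define L where "L = map (\<lambda>n. int (b n)) [kk j..<a j - j + 1]"
  have "U j - {0..nn j} = set L"
    unfolding U_minus_nn[OF assms] partner_image_minus_hole[OF assms]
      b_ge_indices_eq_atLeastAtMost kk_eq_LEAST[OF assms, symmetric] L_def by auto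
  moreover have "sorted_wrt (<) L"
    unfolding L_def sorted_wrt_map
    by (rule sorted_wrt_mono_rel[OF _ sorted_wrt_upt]) (simp add: b_less_iff)
  ultimately show ?thesis
    unfolding zlist_def L_def[symmetric]
    by (simp add: sorted_list_of_set_sort_remdups strict_sorted_iff distinct_remdups_id
        sorted_sort_id)
qed

lemma length_zlist:
  assumes "j \<ge> 1" shows "int (length (zlist j)) = int j - nn j - 1"
proof -
  have "card (partner ` {..<j}) = j"
    using inj_on_subset[OF inj_partner] by (simp add: card_image)
  moreover have "{..<hole j} \<subseteq> partner ` {..<j}" by (rule lessThan_hole_subset[OF assms])
  ultimately have "card (partner ` {..<j} - {..<hole j}) = j - hole j" "hole j \<le> j"
    using card_mono[of "partner ` {..<j}" "{..<hole j}"] by (auto simp: card_Diff_subset)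
  then show ?thesis
    unfolding zlist_def U_minus_nn[OF assms] using nn_eq_hole[OF assms]
    by (simp add: card_image inj_on_def)
qed

lemma z_eq:
  assumes "j \<ge> 1" "1 \<le> i" "int i \<le> int j - nn j - 1"
  shows "z j i = int (b (kk j + i - 1))"
proof -
  have "length (zlist j) = a j - j + 1 - kk j"
    unfolding zlist_eq[OF assms(1)] by (simp only: length_map length_upt)
  then have "i - 1 < a j - j + 1 - kk j" using assms(2,3) length_zlist[OF assms(1)] by linarith
  then show ?thesis unfolding z_def zlist_eq[OF assms(1)] using assms(2) by (simp del: upt_Suc)
qed

theorem lemma5p5:
  fixes j :: nat
  shows
   "(j \<ge> 1 \<longrightarrow> W j = {m j .. int (a j)})
  \<and> (j \<ge> 1 \<longrightarrow>
       int (length (zlist j)) = int j - nn j - 1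
     \<and> (\<forall>i::nat. 1 \<le> i \<and> int i \<le> int j - nn j - 1 \<longrightarrow> z j i = int (b (kk j + i - 1))))
  \<and> (j \<ge> 1 \<and> j \<in> T1 \<longrightarrow> nn j = m j - 2)
  \<and> (j \<ge> 1 \<and> j \<in> T2 \<longrightarrow> nn j = m j - 1)
  \<and> (j \<ge> 1 \<and> j \<in> T3 \<longrightarrow> nn j = m j)
  \<and> (j = 0 \<longrightarrow> S j = {})
  \<and> (j \<in> A \<longrightarrow> S j = {0 .. int (a j)})
  \<and> (j \<in> B \<longrightarrow> S j = {0 .. int (a j)} - {\<lfloor>(phi - 1) * real j\<rfloor>})
  \<and> (j = 0 \<longrightarrow> qq j = 0)
  \<and> (j \<in> A \<longrightarrow> qq j = int (a j) + 1)
  \<and> (j \<in> B \<longrightarrow> qq j = \<lfloor>(phi - 1) * real j\<rfloor>)"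
proof (intro conjI impI allI)
  have m_eq: "m j = int (a j) - int j + 1" unfolding m_def by simp
  show "W j = {m j..int (a j)}" unfolding W_eq_interval m_eq ..
  show "int (length (zlist j)) = int j - nn j - 1" if "j \<ge> 1" using length_zlist[OF that] .
  show "z j i = int (b (kk j + i - 1))" if "j \<ge> 1" "1 \<le> i \<and> int i \<le> int j - nn j - 1" for i
    using z_eq that by blast
  show "nn j = m j - 2" if "j \<ge> 1 \<and> j \<in> T1" using nn_if_T1 that by blast
  show "nn j = m j - 1" if "j \<ge> 1 \<and> j \<in> T2" using nn_if_T2 that by blast
  show "nn j = m j" if "j \<ge> 1 \<and> j \<in> T3" using nn_if_T3 that by blast
  show "S j = {}" if "j = 0" unfolding S_def that by simp
  show "S j = {0..int (a j)}" if "j \<in> A" using S_if_A[OF that] .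
  show "S j = {0..int (a j)} - {\<lfloor>(phi - 1) * real j\<rfloor>}" if "j \<in> B"
    unfolding floor_phi_minus_1_mult using S_if_B[OF that] .
  show "qq j = 0" if "j = 0" unfolding that qq_eq_partner by simp
  show "qq j = int (a j) + 1" if "j \<in> A" using qq_if_A[OF that] .
  show "qq j = \<lfloor>(phi - 1) * real j\<rfloor>" if "j \<in> B"
    unfolding floor_phi_minus_1_mult using qq_if_B[OF that] .
qed

end
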